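(* Let $q$ be a prime power and $1\leqslant s\leqslant q-1$. In the polynomial ring $\mathbb{F}_q[x_1,x_2,y_1,y_2]$ (or its fraction field) the following two identities hold: $$h_{s}\cdot (d_{2}^{*})^{s}=c_{1}^{*}\cdot u_{1}^{s}+u_{-1}^{q-s}\cdot u_{0}\cdot\sum_{i=1}^s (-1)^i\binom{s}{i} (u_{-1} u_{1})^{s-i}(u_{0}^{q+1})^{i-1},$$ $$h_{q-1-s}\cdot d_{2}^{s}=c_{1}\cdot u_{-1}^{s}+u_{0}\cdot u_{1}^{q-s}\cdot\sum_{i=1}^s (-1)^i\binom{s}{i} (u_{-1} u_{1})^{s-i}(u_{0}^{q+1})^{i-1}.$$
   Context: $\mathbb{F}_q$ is the finite field with $q=p^m$ elements. In $\mathbb{F}_q[x_1,x_2,y_1,y_2]$ let $*$ be the $\mathbb{F}_q$-algebra involution with $x_1\mapsto y_2$, $x_2\mapsto y_1$, $y_1\mapsto x_2$, $y_2\mapsto x_1$; write $f^*$ for the image of $f$. Define $d_2:=x_1x_2^q-x_2x_1^q$, $d_1:=x_1x_2^{q^2}-x_2x_1^{q^2}$, $c_0:=d_2^{q-1}$, $c_1:=d_1/d_2$ (a polynomial), and $c_0^*,c_1^*,d_2^*$ their images under $*$. Define $u_0:=x_1y_1+x_2y_2$, $u_1:=x_1^qy_1+x_2^qy_2$, $u_{-1}:=x_1y_1^q+x_2y_2^q$. For $0\leqslant s\leqslant q-1$ define $$h_s:=\frac{u_1^{s+1}(d_2^* )^{q-1-s}+u_{-1}^{q-s}d_2^{s}}{u_0^{q}}.$$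 (One has $h_0=c_1^*$, $h_{q-1}=c_1$, $h_s^*=h_{q-1-s}$.) *)

theory Defs
  imports "HOL-Computational_Algebra.Polynomial_Factorial" "HOL-Library.Cardinality"
begin

text \<open>The polynomial ring F_q[x1,x2,y1,y2] is rendered as the nested polynomial ring
  ('a poly poly poly poly) over a finite field 'a with q = CARD('a) elements.
  Variable order (outermost to innermost): x1, x2, y1, y2.\<close>

type_synonym 'a mpoly4 = "'a poly poly poly poly"

definition X1 :: "'a::comm_ring_1 mpoly4" where "X1 = [:0, 1:]"
definition X2 :: "'a::comm_ring_1 mpoly4" where "X2 = [:[:0, 1:]:]"
definition Y1 :: "'a::comm_ring_1 mpoly4" where "Y1 = [:[:[:0, 1:]:]:]"
definition Y2 :: "'a::comm_ring_1 mpoly4" where "Y2 = [:[:[:[:0, 1:]:]:]:]"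

text \<open>Substitution x1:=a, x2:=b, y1:=c, y2:=d (an F_q-algebra homomorphism).\<close>
definition subst4 :: "'a::comm_ring_1 mpoly4 \<Rightarrow> 'a mpoly4 \<Rightarrow> 'a mpoly4 \<Rightarrow> 'a mpoly4
    \<Rightarrow> 'a mpoly4 \<Rightarrow> 'a mpoly4" where
  "subst4 a b c d f =
     poly (map_poly (\<lambda>g. poly (map_poly (\<lambda>h. poly (map_poly (\<lambda>k.
        poly (map_poly (\<lambda>e. [:[:[:[:e:]:]:]:]) k) d) h) c) g) b) f) a"

definition star :: "'a::comm_ring_1 mpoly4 \<Rightarrow> 'a mpoly4" where
  "star f = subst4 Y2 Y1 X2 X1 f"

definition d2 :: "'a::{field,finite} mpoly4" where
  "d2 = X1 * X2 ^ (CARD('a)) - X2 * X1 ^ (CARD('a))"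

definition d1 :: "'a::{field,finite} mpoly4" where
  "d1 = X1 * X2 ^ (CARD('a)^2) - X2 * X1 ^ (CARD('a)^2)"

text \<open>c1 = d1/d2, which is a polynomial (exact division in the polynomial ring).\<close>
definition c1 :: "'a::{field,finite} mpoly4" where
  "c1 = d1 div d2"

definition u0 :: "'a::{field,finite} mpoly4" where
  "u0 = X1 * Y1 + X2 * Y2"

definition u1 :: "'a::{field,finite} mpoly4" where
  "u1 = X1 ^ (CARD('a)) * Y1 + X2 ^ (CARD('a)) * Y2"

definition um1 :: "'a::{field,finite} mpoly4" where
  "um1 = X1 * Y1 ^ (CARD('a)) + X2 * Y2 ^ (CARD('a))"

definition h :: "nat \<Rightarrow> 'a::{field,finite} mpoly4 fract" where
  "h s = to_fract (u1 ^ (s + 1) * (star d2) ^ (CARD('a) - 1 - s) + um1 ^ (CARD('a) - s) * d2 ^ s)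
         / to_fract (u0 ^ (CARD('a)))"

end

theory Submission
  imports Defs
begin

text \<open>Since every binomial coefficient \<open>q choose k\<close> with \<open>0 < k < q\<close> vanishes in \<open>\<bbbF>\<^sub>q\<close>,
  the \<open>q\<close>-th power is additive on \<open>\<bbbF>\<^sub>q[x1,x2,y1,y2]\<close>. Expanding \<open>u0^q\<close>, \<open>u1^q\<close>
  and \<open>d2^q\<close> with it gives the relations \<open>c1 u0^q = u_{-1} d2^(q-1) + u1^q\<close> (and its
  \<open>*\<close>-image) and \<open>u_{-1} u1 - u0^(q+1) = d2 d2*\<close>. Multiplying the numerator of \<open>h_s\<close> by
  \<open>(d2*)^s\<close>, the first relation absorbs \<open>u1^(s+1) (d2*)^(q-1)\<close>, the second turns
  \<open>(d2 d2*)^s\<close> into \<open>(u_{-1} u1 - u0^(q+1))^s\<close>, and the binomial theorem produces the sum.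
  The identity for \<open>h_(q-1-s)\<close> is the same computation with the roles of \<open>u1, d2*\<close> and
  \<open>u_{-1}, d2\<close> exchanged.\<close>

lemma finite_field_power_card:
  fixes x :: "'a::{field,finite}"
  shows "x ^ CARD('a) = x"
proof (cases "x = 0")
  case False
  let ?U = "UNIV - {0::'a}"
  have "bij_betw ((*) x) ?U ?U"
    by (rule bij_betw_byWitness[where f' = "\<lambda>y. y / x"]) (use False in auto)
  hence "(\<Prod>y\<in>?U. x * y) = \<Prod>?U"
    using prod.reindex_bij_betw[of "(*) x" ?U ?U "\<lambda>y. y"] by simp
  moreover have "(\<Prod>y\<in>?U. x * y) = x ^ card ?U * \<Prod>?U"
    by (simp add: prod.distrib)
  moreover have "\<Prod>?U \<noteq> 0"
    by simp
  ultimately have unit: "x ^ card ?U = 1"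
    by simp
  have "CARD('a) = Suc (card ?U)"
    using finite_UNIV_card_ge_0[where 'a = 'a] by (simp add: card_Diff_singleton)
  hence "x ^ CARD('a) = x * x ^ card ?U"
    by (simp only: power_Suc)
  with unit show ?thesis
    by simp
qed simp

lemma card_field_ge_2: "2 \<le> CARD('a::{field,finite})"
proof -
  have "card {0, 1::'a} \<le> CARD('a)"
    by (rule card_mono) auto
  thus ?thesis
    by simp
qed

text \<open>Both sides of \<open>(X + 1)^q = X^q + 1\<close> have degree \<open>q\<close> and agree at all \<open>q\<close> points
  of the field.\<close>
lemma of_nat_card_choose_eq_0:
  assumes "0 < k" "k < CARD('a::{field,finite})"
  shows "of_nat (CARD('a) choose k) = (0::'a)"
proof -
  let ?q = "CARD('a)"
  have q: "?q \<ge> 1"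
    using card_field_ge_2[where 'a = 'a] by simp
  have "[:1, 1::'a:] ^ ?q = monom 1 ?q + 1"
  proof (rule poly_eqI_degree_lead_coeff[where n = ?q and A = UNIV])
    show "degree ([:1, 1::'a:] ^ ?q) \<le> ?q"
      by (metis degree_linear_power order_refl)
    show "degree (monom (1::'a) ?q + 1) \<le> ?q"
      using q by (intro degree_add_le) (auto simp: degree_monom_le)
    show "coeff ([:1, 1::'a:] ^ ?q) ?q = coeff (monom 1 ?q + 1) ?q"
      using q by (simp add: coeff_linear_power)
    show "card (UNIV :: 'a set) \<ge> ?q"
      by simp
    fix z :: 'a
    show "poly ([:1, 1:] ^ ?q) z = poly (monom 1 ?q + 1) z"
      by (simp add: poly_monom finite_field_power_card add.commute)
  qed
  hence "coeff ([:1, 1::'a:] ^ ?q) k = coeff (monom 1 ?q + 1) k"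
    by simp
  thus ?thesis
    using assms by (simp add: coeff_linear_poly_power coeff_monom)
qed

lemma power_add_eq_if_choose_vanish:
  fixes x y :: "'b::comm_semiring_1"
  assumes "n > 0" and "\<And>k. 0 < k \<Longrightarrow> k < n \<Longrightarrow> of_nat (n choose k) = (0::'b)"
  shows "(x + y) ^ n = x ^ n + y ^ n"
proof -
  have "(x + y) ^ n = (\<Sum>k\<le>n. of_nat (n choose k) * x ^ k * y ^ (n - k))"
    by (rule binomial_ring)
  also have "\<dots> = (\<Sum>k\<in>{0, n}. of_nat (n choose k) * x ^ k * y ^ (n - k))"
    by (rule sum.mono_neutral_right) (use assms(2) in auto)
  finally show ?thesis
    using assms(1) by (simp add: add_ac)
qed

lemma mpoly4_power_card_add:
  fixes x y :: "'a::{field,finite} mpoly4"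
  shows "(x + y) ^ CARD('a) = x ^ CARD('a) + y ^ CARD('a)"
proof (rule power_add_eq_if_choose_vanish)
  show "CARD('a) > 0"
    using card_field_ge_2[where 'a = 'a] by simp
  fix k assume "0 < k" "k < CARD('a)"
  thus "of_nat (CARD('a) choose k) = (0::'a mpoly4)"
    using of_nat_card_choose_eq_0[where 'a = 'a] by (simp add: of_nat_poly)
qed

lemma mpoly4_power_card_diff:
  fixes x y :: "'a::{field,finite} mpoly4"
  shows "(x - y) ^ CARD('a) = x ^ CARD('a) - y ^ CARD('a)"
  using mpoly4_power_card_add[of "x - y" y] by simp

locale comm_ring_hom =
  fixes f :: "'b::comm_ring_1 \<Rightarrow> 'c::comm_ring_1"
  assumes hom_add: "f (x + y) = f x + f y"
    and hom_mult: "f (x * y) = f x * f y"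
    and hom_one: "f 1 = 1"
begin

lemma hom_zero: "f 0 = 0"
  using hom_add[of 0 0] by simp

lemma hom_diff: "f (x - y) = f x - f y"
  using hom_add[of "x - y" y] by (simp add: eq_diff_eq)

lemma hom_power: "f (x ^ n) = f x ^ n"
  by (induction n) (simp_all add: hom_one hom_mult)

lemma map_poly_hom_add: "map_poly f (p + q) = map_poly f p + map_poly f q"
  by (rule poly_eqI) (simp add: coeff_map_poly hom_zero hom_add)

lemma map_poly_hom_mult: "map_poly f (p * q) = map_poly f p * map_poly f q"
proof (induction p)
  case (pCons a p)
  have "map_poly f (smult a q) = smult (f a) (map_poly f q)"
    by (rule poly_eqI) (simp add: coeff_map_poly hom_zero hom_mult)
  with pCons.IH show ?case
    by (simp add: map_poly_pCons map_poly_hom_add hom_zero)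
qed simp

lemma comm_ring_hom_eval_map_poly: "comm_ring_hom (\<lambda>p. poly (map_poly f p) x)"
  by unfold_locales (simp_all add: map_poly_hom_add map_poly_hom_mult hom_one)

end

lemma comm_ring_hom_subst4: "comm_ring_hom (subst4 a b c d)"
proof -
  have "comm_ring_hom (\<lambda>e::'a::comm_ring_1. [:[:[:[:e:]:]:]:])"
    by unfold_locales (simp_all add: one_pCons)
  thus ?thesis
    unfolding subst4_def[abs_def] by (intro comm_ring_hom.comm_ring_hom_eval_map_poly)
qed

interpretation star: comm_ring_hom star
  unfolding star_def[abs_def] by (rule comm_ring_hom_subst4)

lemma star_X1: "star X1 = Y2" and star_X2: "star X2 = Y1"
  and star_Y1: "star Y1 = X2" and star_Y2: "star Y2 = X1"
  by (simp_all add: star_def subst4_def X1_def X2_def Y1_def Y2_def map_poly_pCons one_pCons)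

lemma star_u0: "star u0 = u0" and star_u1: "star u1 = um1" and star_um1: "star um1 = u1"
  by (simp_all add: u0_def u1_def um1_def star.hom_add star.hom_mult star.hom_power
      star_X1 star_X2 star_Y1 star_Y2 algebra_simps)

lemma star_d2: "star d2 = Y2 * Y1 ^ CARD('a) - Y1 * (Y2 :: 'a::{field,finite} mpoly4) ^ CARD('a)"
  by (simp add: d2_def star.hom_diff star.hom_mult star.hom_power star_X1 star_X2)

lemma d2_nonzero: "(d2 :: 'a::{field,finite} mpoly4) \<noteq> 0"
proof
  assume "(d2 :: 'a mpoly4) = 0"
  hence "coeff (d2 :: 'a mpoly4) 1 = 0"
    by simp
  moreover have "coeff (d2 :: 'a mpoly4) 1 = [:0, 1:] ^ CARD('a)"
    using card_field_ge_2[where 'a = 'a]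
    by (simp add: d2_def X1_def X2_def poly_const_pow coeff_linear_poly_power power_0_left)
  ultimately show False
    by simp
qed

lemma u0_nonzero: "(u0 :: 'a::{field,finite} mpoly4) \<noteq> 0"
proof
  assume "(u0 :: 'a mpoly4) = 0"
  hence "coeff (u0 :: 'a mpoly4) 1 = 0"
    by simp
  moreover have "coeff (u0 :: 'a mpoly4) 1 = [:[:0, 1:]:]"
    by (simp add: u0_def X1_def X2_def Y1_def Y2_def)
  ultimately show False
    by simp
qed

lemma d2_dvd_d1: "(d2 :: 'a::{field,finite} mpoly4) dvd d1"
proof -
  let ?q = "CARD('a)"
  let ?S = "X1 ^ (?q - 1) :: 'a mpoly4" and ?T = "X2 ^ (?q - 1) :: 'a mpoly4"
  have q: "?q = Suc (?q - 1)" and q2: "?q ^ 2 = Suc ((?q - 1) * (?q + 1))"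
    using card_field_ge_2[where 'a = 'a] by (auto simp: power2_eq_square algebra_simps)
  have pow_q: "X ^ ?q = X * X ^ (?q - 1)" for X :: "'a mpoly4"
    by (subst q, simp only: power_Suc diff_Suc_1)
  have pow_q2: "X ^ (?q ^ 2) = X * (X ^ (?q - 1)) ^ (?q + 1)" for X :: "'a mpoly4"
    by (simp only: q2 power_Suc power_mult)
  have d2_eq: "(d2 :: 'a mpoly4) = X1 * X2 * (?T - ?S)"
    unfolding d2_def pow_q by (simp add: algebra_simps)
  have d1_eq: "(d1 :: 'a mpoly4) = X1 * X2 * (?T ^ (?q + 1) - ?S ^ (?q + 1))"
    unfolding d1_def pow_q2 by (simp add: algebra_simps)
  have "?T - ?S dvd ?T ^ (?q + 1) - ?S ^ (?q + 1)"
    by (subst power_diff_sumr2) simp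
  thus ?thesis
    unfolding d2_eq d1_eq by (rule mult_dvd_mono[OF dvd_refl])
qed

lemma c1_mult_d2: "c1 * d2 = (d1 :: 'a::{field,finite} mpoly4)"
  unfolding c1_def using d2_dvd_d1 by (rule dvd_div_mult_self)

text \<open>After expanding by Frobenius, all terms are pairings and determinants of the vectors
  \<open>(X1, X2)\<close>, \<open>(X1^q, X2^q)\<close>, \<open>(X1^q^2, X2^q^2)\<close> and \<open>(Y1^q, Y2^q)\<close>, and the identity
  becomes the three-term relation between \<open>2 \<times> 2\<close> determinants.\<close>
lemma d1_mult_u0_power_card:
  "(d1 :: 'a::{field,finite} mpoly4) * u0 ^ CARD('a) = um1 * d2 ^ CARD('a) + u1 ^ CARD('a) * d2"
proof -
  let ?q = "CARD('a)"
  have three_term: "(x1 * b2 - x2 * b1) * (a1 * c1 + a2 * c2) =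
      (x1 * c1 + x2 * c2) * (a1 * b2 - a2 * b1) + (b1 * c1 + b2 * c2) * (x1 * a2 - x2 * a1)"
    for x1 x2 a1 a2 b1 b2 c1 c2 :: "'a mpoly4"
    by (simp add: algebra_simps)
  have d1_eq: "(d1 :: 'a mpoly4) = X1 * (X2 ^ ?q) ^ ?q - X2 * (X1 ^ ?q) ^ ?q"
    unfolding d1_def by (simp add: power_mult power2_eq_square)
  have u0_pow: "(u0 :: 'a mpoly4) ^ ?q = X1 ^ ?q * Y1 ^ ?q + X2 ^ ?q * Y2 ^ ?q"
    unfolding u0_def by (simp add: mpoly4_power_card_add power_mult_distrib)
  have d2_pow: "(d2 :: 'a mpoly4) ^ ?q = X1 ^ ?q * (X2 ^ ?q) ^ ?q - X2 ^ ?q * (X1 ^ ?q) ^ ?q"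
    unfolding d2_def by (simp add: mpoly4_power_card_diff power_mult_distrib)
  have u1_pow: "(u1 :: 'a mpoly4) ^ ?q = (X1 ^ ?q) ^ ?q * Y1 ^ ?q + (X2 ^ ?q) ^ ?q * Y2 ^ ?q"
    unfolding u1_def by (simp add: mpoly4_power_card_add power_mult_distrib)
  show ?thesis
    unfolding d1_eq u0_pow d2_pow u1_pow unfolding um1_def d2_def by (rule three_term)
qed

lemma c1_mult_u0_power_card:
  "(c1 :: 'a::{field,finite} mpoly4) * u0 ^ CARD('a) = um1 * d2 ^ (CARD('a) - 1) + u1 ^ CARD('a)"
proof -
  have "d2 ^ CARD('a) = d2 * (d2 :: 'a mpoly4) ^ (CARD('a) - 1)"
    using card_field_ge_2[where 'a = 'a] by (simp flip: power_Suc)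
  moreover have "d2 * (c1 * u0 ^ CARD('a)) = (d1 :: 'a mpoly4) * u0 ^ CARD('a)"
    by (metis c1_mult_d2 mult.assoc mult.commute)
  ultimately have "d2 * (c1 * u0 ^ CARD('a)) = d2 * (um1 * d2 ^ (CARD('a) - 1) + u1 ^ CARD('a) :: 'a mpoly4)"
    by (simp add: d1_mult_u0_power_card algebra_simps)
  thus ?thesis
    using d2_nonzero[where 'a = 'a] by simp
qed

lemma star_c1_mult_u0_power_card:
  "star (c1 :: 'a::{field,finite} mpoly4) * u0 ^ CARD('a) =
    u1 * star d2 ^ (CARD('a) - 1) + um1 ^ CARD('a)"
  using arg_cong[OF c1_mult_u0_power_card, of star]
  by (simp add: star.hom_add star.hom_mult star.hom_power star_u0 star_u1 star_um1)

lemma um1_mult_u1_minus_u0_power: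
  "(um1 :: 'a::{field,finite} mpoly4) * u1 - u0 ^ (CARD('a) + 1) = d2 * star d2"
proof -
  let ?q = "CARD('a)"
  have "u0 ^ (?q + 1) = u0 * (u0 :: 'a mpoly4) ^ ?q"
    by simp
  also have "\<dots> = (X1 * Y1 + X2 * Y2) * (X1 ^ ?q * Y1 ^ ?q + X2 ^ ?q * Y2 ^ ?q)"
    unfolding u0_def by (simp add: mpoly4_power_card_add power_mult_distrib)
  finally show ?thesis
    unfolding um1_def u1_def star_d2 unfolding d2_def by (simp add: algebra_simps)
qed

lemma power_diff_minus_power_eq_binomial_sum:
  fixes a b :: "'b::comm_ring_1"
  shows "b * (\<Sum>i=1..s. (-1) ^ i * of_nat (s choose i) * a ^ (s - i) * b ^ (i - 1)) =
    (a - b) ^ s - a ^ s"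
proof -
  have "(a - b) ^ s = (-b + a) ^ s"
    by simp
  also have "\<dots> = (\<Sum>k\<le>s. of_nat (s choose k) * (-b) ^ k * a ^ (s - k))"
    by (rule binomial_ring)
  also have "{..s} = insert 0 {1..s}"
    by auto
  also have "(\<Sum>k\<in>insert 0 {1..s}. of_nat (s choose k) * (-b) ^ k * a ^ (s - k)) =
      a ^ s + (\<Sum>k=1..s. of_nat (s choose k) * (-b) ^ k * a ^ (s - k))"
    by (subst sum.insert) auto
  also have "(\<Sum>k=1..s. of_nat (s choose k) * (-b) ^ k * a ^ (s - k)) =
      b * (\<Sum>i=1..s. (-1) ^ i * of_nat (s choose i) * a ^ (s - i) * b ^ (i - 1))"
    unfolding sum_distrib_left
  proof (rule sum.cong)
    fix k assume "k \<in> {1..s}"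
    then obtain j where k: "k = Suc j"
      by (cases k) auto
    have "(-b) ^ k = (-1) ^ k * b ^ k"
      by (rule power_minus)
    with k show "of_nat (s choose k) * (-b) ^ k * a ^ (s - k) =
        b * ((-1) ^ k * of_nat (s choose k) * a ^ (s - k) * b ^ (k - 1))"
      by (simp add: algebra_simps)
  qed simp
  finally show ?thesis
    by simp
qed

lemma cross_multiplied_h_identity:
  fixes u v w Q B D D' C :: "'b::comm_ring_1"
  assumes s: "1 \<le> s" "s \<le> q - 1"
    and B: "B = w * Q"
    and det: "v * u - B = D * D'"
    and C: "u * D' ^ (q - 1) + v ^ q = C * Q"
  shows "(u ^ (s + 1) * D' ^ (q - 1 - s) + v ^ (q - s) * D ^ s) * D' ^ s =
    (C * u ^ s + v ^ (q - s) * w *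
      (\<Sum>i=1..s. (-1) ^ i * of_nat (s choose i) * (v * u) ^ (s - i) * B ^ (i - 1))) * Q"
proof -
  let ?S = "\<Sum>i=1..s. (-1) ^ i * of_nat (s choose i) * (v * u) ^ (s - i) * B ^ (i - 1)"
  have D'_pow: "D' ^ (q - 1 - s) * D' ^ s = D' ^ (q - 1)" and v_pow: "v ^ q = v ^ (q - s) * v ^ s"
    using s by (simp_all flip: power_add)
  have binomial: "B * ?S = (D * D') ^ s - (v * u) ^ s"
    using power_diff_minus_power_eq_binomial_sum[of B s "v * u"] det by simp
  have "(u ^ (s + 1) * D' ^ (q - 1 - s) + v ^ (q - s) * D ^ s) * D' ^ s =
      u ^ s * (u * (D' ^ (q - 1 - s) * D' ^ s)) + v ^ (q - s) * (D ^ s * D' ^ s)"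
    by (simp add: algebra_simps)
  also have "\<dots> = u ^ s * (u * D' ^ (q - 1)) + v ^ (q - s) * (D * D') ^ s"
    by (simp only: D'_pow power_mult_distrib)
  also have "\<dots> = u ^ s * (C * Q - v ^ q) + v ^ (q - s) * (D * D') ^ s"
    using C by (metis add_diff_cancel_right')
  also have "\<dots> = u ^ s * (C * Q) + v ^ (q - s) * ((D * D') ^ s - (v * u) ^ s)"
    by (simp add: v_pow power_mult_distrib algebra_simps)
  also have "\<dots> = u ^ s * (C * Q) + v ^ (q - s) * (B * ?S)"
    by (simp only: binomial)
  also have "\<dots> = (C * u ^ s + v ^ (q - s) * w * ?S) * Q"
    by (simp add: B algebra_simps)
  finally show ?thesis .
qed

lemma to_fract_div_mult_eq:
  fixes N Q X R :: "'b::idom"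
  assumes "Q \<noteq> 0" and "N * X = R * Q"
  shows "to_fract N / to_fract Q * to_fract X = to_fract R"
proof -
  have "to_fract N * to_fract X = to_fract R * to_fract Q"
    using assms(2) by (simp flip: to_fract_mult)
  thus ?thesis
    using assms(1) by (simp add: field_simps)
qed

theorem lemma3p1:
  fixes s :: nat
  assumes "1 \<le> s" and "s \<le> CARD('a::{field,finite}) - 1"
  shows "(h s * to_fract ((star (d2 :: 'a mpoly4)) ^ s) =
           to_fract (star c1 * u1 ^ s + um1 ^ (CARD('a) - s) * u0 *
             (\<Sum>i=1..s. (-1) ^ i * of_nat (s choose i) * (um1 * u1) ^ (s - i)
                 * (u0 ^ (CARD('a) + 1)) ^ (i - 1)))) \<and>
         (h (CARD('a) - 1 - s) * to_fract ((d2 :: 'a mpoly4) ^ s) =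
           to_fract (c1 * um1 ^ s + u0 * u1 ^ (CARD('a) - s) *
             (\<Sum>i=1..s. (-1) ^ i * of_nat (s choose i) * (um1 * u1) ^ (s - i)
                 * (u0 ^ (CARD('a) + 1)) ^ (i - 1))))"
    (is "?first \<and> ?second")
proof
  let ?q = "CARD('a)"
  have Q: "(u0 :: 'a mpoly4) ^ ?q \<noteq> 0"
    using u0_nonzero by simp
  have B: "(u0 :: 'a mpoly4) ^ (?q + 1) = u0 * u0 ^ ?q"
    by simp
  have det: "um1 * u1 - u0 ^ (?q + 1) = d2 * star (d2 :: 'a mpoly4)"
    by (rule um1_mult_u1_minus_u0_power)
  show ?first
    unfolding h_def
    using cross_multiplied_h_identity[OF assms B det star_c1_mult_u0_power_card[symmetric]]
    by (intro to_fract_div_mult_eq[OF Q])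
  have "(um1 ^ (s + 1) * d2 ^ (?q - 1 - s) + u1 ^ (?q - s) * star d2 ^ s) * d2 ^ s =
      (c1 * um1 ^ s + u1 ^ (?q - s) * u0 *
        (\<Sum>i=1..s. (-1) ^ i * of_nat (s choose i) * (u1 * um1) ^ (s - i) * (u0 ^ (?q + 1)) ^ (i - 1)))
      * (u0 :: 'a mpoly4) ^ ?q"
    using det by (intro cross_multiplied_h_identity[OF assms B _ c1_mult_u0_power_card[symmetric]])
      (simp add: ac_simps)
  moreover have "?q - 1 - s + 1 = ?q - s" "?q - 1 - (?q - 1 - s) = s" "?q - (?q - 1 - s) = s + 1"
    using assms by auto
  ultimately show ?second
    unfolding h_def by (intro to_fract_div_mult_eq[OF Q]) (simp add: ac_simps)
qed

end
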